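(* Suppose all agents are strategic and have complete and perfect information. For any categorial sequential allocation mechanism $f_\mathcal O$, any agent $j$, and any profile, the rank (in $R_j$) of the bundle allocated to agent $j$ in the subgame-perfect Nash equilibrium is at most $n^p+1-\prod_{i=1}^{p}k_{j,i}$.
   Context: Basic categorized domain: $n$ agents, $p$ categories $D_i=\{1,\ldots,n\}$ of indivisible items, bundles $\mathfrak D=D_1\times\cdots\times D_p$; each agent $j$ has a linear order $R_j$ over $\mathfrak D$. The rank of a bundle in $R_j$ is its position (top $=1$, bottom $=n^p$). CSAM $f_\mathcal O$: given a linear order $\mathcal O$ over $\{1,\ldots,n\}\times\{1,\ldots,p\}$, in rounds $t=1,\ldots,np$, if the $t$-th element of $\mathcal O$ is $(j,i)$ then agent $j$ chooses an item $d_{j,i}$ from the items of $D_i$ not yet chosen; all choices are observed by all agents; agent $j$ finally receives $(d_{j,1},\ldots,d_{j,p})$. With strategic agents with complete and perfect information, this is an extensive-form game in which each agent's preference over outcomes is her linear order $R_j$ over her final bundle; its subgame-perfect Nash equilibrium (computed by backward induction) is unique since preferences are linear orders. $k_{j,i}$ denotes the number of items of $D_i$ still available right before agent $j$ chooses from $D_i$, i.e. $n$ minus the number of agents who choose from $D_i$ before $j$ in $\mathcal O$. *)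

theory Defs
  imports Main
begin

(* Agents are 0..<n, categories 0..<p, items of each category 0..<n (0-based). *)

definition bundles :: "nat \<Rightarrow> nat \<Rightarrow> nat list set" where
  "bundles n p = {b. length b = p \<and> set b \<subseteq> {..<n}}"

(* A linear order over {0..<n} x {0..<p}, given as a list enumerating it. *)
definition valid_order :: "nat \<Rightarrow> nat \<Rightarrow> (nat \<times> nat) list \<Rightarrow> bool" where
  "valid_order n p sq \<longleftrightarrow> distinct sq \<and> set sq = {..<n} \<times> {..<p}"

definition pos :: "(nat \<times> nat) list \<Rightarrow> nat \<times> nat \<Rightarrow> nat" where
  "pos sq x = (THE t. t < length sq \<and> sq ! t = x)"

(* bundle of agent j from a complete history h (h ! t = item chosen in round t) *)
definition bundle_of :: "(nat \<times> nat) list \<Rightarrow> nat \<Rightarrow> nat list \<Rightarrow> nat \<Rightarrow> nat list" where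
  "bundle_of sq p h j = map (\<lambda>i. h ! pos sq (j, i)) [0..<p]"

definition avail :: "nat \<Rightarrow> (nat \<times> nat) list \<Rightarrow> nat list \<Rightarrow> nat \<Rightarrow> nat set" where
  "avail n sq h i = {d. d < n \<and> (\<forall>t < length h. snd (sq ! t) = i \<longrightarrow> h ! t \<noteq> d)}"

(* Backward induction: spe ... k h is the complete history reached from history h
   (with k rounds remaining) when every agent plays her subgame-perfect choice.
   (b, b') \<in> R j means agent j weakly prefers bundle b to bundle b'. *)
primrec spe :: "nat \<Rightarrow> nat \<Rightarrow> (nat \<times> nat) list \<Rightarrow> (nat \<Rightarrow> nat list rel) \<Rightarrow> nat \<Rightarrow> nat list \<Rightarrow> nat list" where
  "spe n p sq R 0 h = h"
| "spe n p sq R (Suc k) h =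
     (let j = fst (sq ! length h); i = snd (sq ! length h); A = avail n sq h i;
          best = (THE d. d \<in> A \<and> (\<forall>d'\<in>A.
                    (bundle_of sq p (spe n p sq R k (h @ [d])) j,
                     bundle_of sq p (spe n p sq R k (h @ [d'])) j) \<in> R j))
      in spe n p sq R k (h @ [best]))"

definition spne_outcome :: "nat \<Rightarrow> nat \<Rightarrow> (nat \<times> nat) list \<Rightarrow> (nat \<Rightarrow> nat list rel) \<Rightarrow> nat list" where
  "spne_outcome n p sq R = spe n p sq R (length sq) []"

(* rank of bundle b in R j: number of bundles weakly preferred to b (top = 1) *)
definition rank :: "nat \<Rightarrow> nat \<Rightarrow> (nat \<Rightarrow> nat list rel) \<Rightarrow> nat \<Rightarrow> nat list \<Rightarrow> nat" where
  "rank n p R j b = card {b' \<in> bundles n p. (b', b) \<in> R j}"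

(* k_{j,i}: n minus the number of agents choosing from D_i before j *)
definition kval :: "nat \<Rightarrow> (nat \<times> nat) list \<Rightarrow> nat \<Rightarrow> nat \<Rightarrow> nat" where
  "kval n sq j i = n - card {t. t < pos sq (j, i) \<and> snd (sq ! t) = i}"

end

theory Submission
  imports Defs
begin

text \<open>
  From any history, agent \<open>j\<close> can point to at least
  \<open>\<Prod> k\<^sub>j\<^sub>,\<^sub>i\<close> (product over the categories she has not chosen from yet) bundles
  that are all weakly worse for her than her equilibrium bundle: when another agent moves
  nothing changes, and when \<open>j\<close> herself chooses from category \<open>i\<close> she has at least
  \<open>k\<^sub>j\<^sub>,\<^sub>i\<close> available items, each leading to an equilibrium bundle she likes at most as
  much as the one she picks, and the families of worse bundles obtained for different items
  are disjoint since they differ in coordinate \<open>i\<close>. By antisymmetry, only the equilibrium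
  bundle itself can be both weakly better and weakly worse than it, which gives the bound
  on its rank.
\<close>

lemma linear_order_onD:
  assumes "linear_order_on B r"
  shows "\<And>x. x \<in> B \<Longrightarrow> (x, x) \<in> r"
    and "trans r"
    and "antisym r"
    and "\<And>x y. x \<in> B \<Longrightarrow> y \<in> B \<Longrightarrow> x \<noteq> y \<Longrightarrow> (x, y) \<in> r \<or> (y, x) \<in> r"
  using assms partial_order_onD[of B r] refl_onD[of B r]
  unfolding linear_order_on_def total_on_def by blast+

lemma ex1_best_wrt_linear_order:
  assumes "finite A" and "A \<noteq> {}" and lin: "linear_order_on B r"
    and inj: "inj_on f A" and "f ` A \<subseteq> B"
  shows "\<exists>!d. d \<in> A \<and> (\<forall>d'\<in>A. (f d, f d') \<in> r)"
proof -
  note L = linear_order_onD[OF lin]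
  have "\<exists>d\<in>A. \<forall>d'\<in>A. (f d, f d') \<in> r"
    using assms(1,2,5,4)
  proof (induction A rule: finite_ne_induct)
    case (singleton x)
    then show ?case using L(1) by auto
  next
    case (insert x F)
    then obtain m where m: "m \<in> F" "\<forall>d'\<in>F. (f m, f d') \<in> r"
      by (auto simp: inj_on_insert)
    have fx: "f x \<in> B" "f m \<in> B" using insert.prems m by auto
    have "f x \<noteq> f m" using insert.prems insert.hyps m by (metis inj_onD insertCI)
    then consider "(f x, f m) \<in> r" | "(f m, f x) \<in> r" using L(4)[OF fx] by blast
    then show ?case using m L(1,2) fx by cases (blast dest: transD)+
  qed
  moreover have "d = e"
    if "d \<in> A" "\<forall>d'\<in>A. (f d, f d') \<in> r" "e \<in> A" "\<forall>d'\<in>A. (f e, f d') \<in> r" for d e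
    using that antisymD[OF L(3)] inj_onD[OF inj] by metis
  ultimately show ?thesis by blast
qed

lemma card_le_card_UN_disjoint:
  assumes "finite A" and "\<And>d. d \<in> A \<Longrightarrow> finite (F d)" and "\<And>d. d \<in> A \<Longrightarrow> m \<le> card (F d)"
    and "\<And>d d'. d \<in> A \<Longrightarrow> d' \<in> A \<Longrightarrow> d \<noteq> d' \<Longrightarrow> F d \<inter> F d' = {}"
  shows "card A * m \<le> card (\<Union>d\<in>A. F d)"
proof -
  have "card A * m = (\<Sum>d\<in>A. m)" by simp
  also have "\<dots> \<le> (\<Sum>d\<in>A. card (F d))" using assms(3) by (rule sum_mono)
  also have "\<dots> = card (\<Union>d\<in>A. F d)" using assms by (intro card_UN_disjoint[symmetric]) auto
  finally show ?thesis .
qed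

lemma card_above_plus_card_below_le:
  assumes "antisym r" and "finite B" and "X \<subseteq> B" and "\<forall>x\<in>X. (b, x) \<in> r"
  shows "card {y \<in> B. (y, b) \<in> r} + card X \<le> card B + 1"
proof -
  define U where "U = {y \<in> B. (y, b) \<in> r}"
  have fin: "finite U" "finite X" using assms(2,3) finite_subset unfolding U_def by auto
  have "U \<inter> X \<subseteq> {b}" using assms(1,4) unfolding U_def by (auto dest: antisymD)
  then have "card (U \<inter> X) \<le> 1" using card_mono[of "{b}"] by simp
  moreover have "card (U \<union> X) \<le> card B" using assms(2,3) unfolding U_def by (intro card_mono) auto
  ultimately show ?thesis using card_Un_Int[OF fin] unfolding U_def by linarith
qed

lemma finite_bundles: "finite (bundles n p)"
  unfolding bundles_def using finite_lists_length_eq[of "{..<n}" p] by (simp add: conj_commute)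

lemma card_bundles: "card (bundles n p) = n ^ p"
  unfolding bundles_def using card_lists_length_eq[of "{..<n}" p] by (simp add: conj_commute)

lemma card_avail_ge:
  "n - card {t. t < length h \<and> snd (sq ! t) = i} \<le> card (avail n sq h i)"
proof -
  define T where "T = {t. t < length h \<and> snd (sq ! t) = i}"
  have "card {..<n} - card (nth h ` T) \<le> card ({..<n} - nth h ` T)"
    by (rule diff_card_le_card_Diff) (auto simp: T_def)
  also have "\<dots> \<le> card (avail n sq h i)"
    by (rule card_mono) (auto simp: avail_def T_def)
  finally show ?thesis
    using card_image_le[of T "nth h"] unfolding T_def by simp
qed

lemma spe_append: "\<exists>s. spe n p sq R k h = h @ s \<and> length s = k"
proof (induction k arbitrary: h)
  case (Suc k)
  obtain d where "spe n p sq R (Suc k) h = spe n p sq R k (h @ [d])"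
    by (simp add: Let_def)
  moreover obtain s where "spe n p sq R k (h @ [d]) = h @ [d] @ s" "length s = k"
    using Suc.IH[of "h @ [d]"] by auto
  ultimately show ?case by (intro exI[of _ "d # s"]) simp
qed simp

lemma length_spe: "length (spe n p sq R k h) = length h + k"
  using spe_append[of n p sq R k h] by auto

definition pending :: "(nat \<times> nat) list \<Rightarrow> nat \<Rightarrow> nat \<Rightarrow> nat \<Rightarrow> nat set" where
  "pending sq p j m = {i. i < p \<and> m \<le> pos sq (j, i)}"

definition keeps_choices :: "(nat \<times> nat) list \<Rightarrow> nat \<Rightarrow> nat \<Rightarrow> nat list \<Rightarrow> nat list \<Rightarrow> bool" where
  "keeps_choices sq p j h b \<longleftrightarrow> (\<forall>i<p. pos sq (j, i) < length h \<longrightarrow> b ! i = h ! pos sq (j, i))"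

lemma finite_pending: "finite (pending sq p j m)"
  unfolding pending_def by simp

lemma keeps_choices_snoc: "keeps_choices sq p j (h @ [d]) b \<Longrightarrow> keeps_choices sq p j h b"
  unfolding keeps_choices_def by (auto simp: nth_append)

lemma keeps_choices_last:
  "keeps_choices sq p j (h @ [d]) b \<Longrightarrow> i < p \<Longrightarrow> pos sq (j, i) = length h \<Longrightarrow> b ! i = d"
  unfolding keeps_choices_def by auto

definition worse_bundles ::
    "nat \<Rightarrow> nat \<Rightarrow> (nat \<times> nat) list \<Rightarrow> nat list rel \<Rightarrow> nat \<Rightarrow> nat list \<Rightarrow> nat list \<Rightarrow> nat list set" where
  "worse_bundles n p sq r j h b = {b' \<in> bundles n p. (b, b') \<in> r \<and> keeps_choices sq p j h b'}"

lemma finite_worse_bundles: "finite (worse_bundles n p sq r j h b)"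
  unfolding worse_bundles_def using finite_bundles by simp

lemma worse_bundles_snoc_subset:
  "worse_bundles n p sq r j (h @ [d]) b \<subseteq> worse_bundles n p sq r j h b"
  unfolding worse_bundles_def using keeps_choices_snoc by blast

lemma worse_bundles_antimono:
  "trans r \<Longrightarrow> (b\<^sub>1, b\<^sub>2) \<in> r \<Longrightarrow> worse_bundles n p sq r j h b\<^sub>2 \<subseteq> worse_bundles n p sq r j h b\<^sub>1"
  unfolding worse_bundles_def by (auto dest: transD)

lemma worse_bundles_snoc_disjoint:
  assumes "i < p" "pos sq (j, i) = length h" "d \<noteq> d'"
  shows "worse_bundles n p sq r j (h @ [d]) b \<inter> worse_bundles n p sq r j (h @ [d']) b' = {}"
  using keeps_choices_last[OF _ assms(1,2)] assms(3) unfolding worse_bundles_def by blast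

context
  fixes n p :: nat and sq :: "(nat \<times> nat) list" and R :: "nat \<Rightarrow> nat list rel"
  assumes valid: "valid_order n p sq"
    and lin: "\<forall>a<n. linear_order_on (bundles n p) (R a)"
begin

lemma distinct_sq: "distinct sq" and set_sq: "set sq = {..<n} \<times> {..<p}"
  using valid by (auto simp: valid_order_def)

lemma pos_nth: "t < length sq \<Longrightarrow> pos sq (sq ! t) = t"
  unfolding pos_def using distinct_sq by (auto simp: nth_eq_iff_index_eq)

lemma nth_sq_bounds: "t < length sq \<Longrightarrow> fst (sq ! t) < n \<and> snd (sq ! t) < p"
  using set_sq nth_mem by (metis SigmaE fst_conv lessThan_iff snd_conv)

lemma nth_pos_sq:
  assumes "j < n" "i < p"
  shows "pos sq (j, i) < length sq \<and> sq ! pos sq (j, i) = (j, i)"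
proof -
  have "(j, i) \<in> set sq" using set_sq assms by auto
  then show ?thesis by (metis in_set_conv_nth pos_nth)
qed

lemma card_earlier_same_category_less:
  assumes lh: "length h < length sq"
  shows "card {t. t < length h \<and> snd (sq ! t) = snd (sq ! length h)} < n"
proof -
  define i where "i = snd (sq ! length h)"
  define T where "T = {t. t < length h \<and> snd (sq ! t) = i}"
  have inj: "inj_on (nth sq) T"
    using distinct_sq lh unfolding T_def by (intro inj_on_nth) auto
  have "nth sq ` T \<subseteq> ({..<n} \<times> {i}) - {sq ! length h}"
  proof
    fix x assume "x \<in> nth sq ` T"
    then obtain t where t: "t < length h" "snd (sq ! t) = i" "x = sq ! t" by (auto simp: T_def)
    moreover have "sq ! t \<noteq> sq ! length h"
      using distinct_sq lh t(1) by (simp add: nth_eq_iff_index_eq)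
    ultimately show "x \<in> ({..<n} \<times> {i}) - {sq ! length h}"
      using nth_sq_bounds[of t] lh by (cases "sq ! t") auto
  qed
  then have "card (nth sq ` T) \<le> card (({..<n} \<times> {i}) - {sq ! length h})"
    by (intro card_mono) auto
  then have "card T \<le> card (({..<n} \<times> {i}) - {sq ! length h})"
    using card_image[OF inj] by simp
  moreover have "sq ! length h \<in> {..<n} \<times> {i}"
    using nth_sq_bounds[OF lh] unfolding i_def by (cases "sq ! length h") auto
  moreover have "0 < n" using nth_sq_bounds[OF lh] by linarith
  ultimately show ?thesis unfolding T_def i_def by (simp add: card_cartesian_product)
qed

lemma bundle_of_in_bundles:
  assumes "j < n" "length h = length sq" "\<forall>x\<in>set h. x < n"
  shows "bundle_of sq p h j \<in> bundles n p"
  using assms nth_pos_sq unfolding bundle_of_def bundles_def by (auto simp: nth_mem)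

lemma bundle_of_mem_worse_bundles:
  assumes j: "j < n" and "length h = length sq" "\<forall>x\<in>set h. x < n"
  shows "bundle_of sq p h j \<in> worse_bundles n p sq (R j) j h (bundle_of sq p h j)"
proof -
  have b: "bundle_of sq p h j \<in> bundles n p" using bundle_of_in_bundles assms by blast
  have "linear_order_on (bundles n p) (R j)" using lin j by blast
  moreover have "keeps_choices sq p j h (bundle_of sq p h j)"
    by (simp add: keeps_choices_def bundle_of_def)
  ultimately show ?thesis using linear_order_onD(1) b by (simp add: worse_bundles_def)
qed

lemma spe_Suc_best:
  assumes len: "length h + Suc k = length sq"
    and bounded: "\<forall>d\<in>avail n sq h (snd (sq ! length h)). \<forall>x\<in>set (spe n p sq R k (h @ [d])). x < n"
  shows "\<exists>best\<in>avail n sq h (snd (sq ! length h)).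
          (\<forall>d\<in>avail n sq h (snd (sq ! length h)).
             (bundle_of sq p (spe n p sq R k (h @ [best])) (fst (sq ! length h)),
              bundle_of sq p (spe n p sq R k (h @ [d])) (fst (sq ! length h))) \<in> R (fst (sq ! length h)))
          \<and> spe n p sq R (Suc k) h = spe n p sq R k (h @ [best])"
proof -
  define a where "a = fst (sq ! length h)"
  define i where "i = snd (sq ! length h)"
  define A where "A = avail n sq h i"
  define f where "f d = bundle_of sq p (spe n p sq R k (h @ [d])) a" for d
  have lh: "length h < length sq" using len by simp
  have ai: "a < n" "i < p" using nth_sq_bounds[OF lh] unfolding a_def i_def by auto
  have "pos sq (a, i) = length h" using pos_nth[OF lh] unfolding a_def i_def by simp
  then have f_nth: "f d ! i = d" for d
    using spe_append[of n p sq R k "h @ [d]"] ai(2) by (auto simp: f_def bundle_of_def nth_append)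
  have fin: "finite A" by (simp add: A_def avail_def)
  have "A \<noteq> {}"
    using card_avail_ge[of n h sq i] card_earlier_same_category_less[OF lh] fin
    unfolding A_def i_def by fastforce
  moreover have "inj_on f A" by (metis f_nth inj_onI)
  moreover have "f d \<in> bundles n p" if "d \<in> A" for d
    unfolding f_def using bounded that ai(1) len
    by (intro bundle_of_in_bundles) (auto simp: length_spe A_def i_def)
  moreover have "linear_order_on (bundles n p) (R a)" using lin ai by blast
  ultimately have "\<exists>!d. d \<in> A \<and> (\<forall>d'\<in>A. (f d, f d') \<in> R a)"
    using fin by (intro ex1_best_wrt_linear_order) auto
  from theI'[OF this] show ?thesis
    by (intro bexI[of _ "THE d. d \<in> A \<and> (\<forall>d'\<in>A. (f d, f d') \<in> R a)"])
      (auto simp: A_def f_def a_def i_def Let_def)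
qed

lemma spe_bounded:
  "length h + k = length sq \<Longrightarrow> \<forall>x\<in>set h. x < n \<Longrightarrow> \<forall>x\<in>set (spe n p sq R k h). x < n"
proof (induction k arbitrary: h)
  case (Suc k)
  have snoc: "length (h @ [d]) + k = length sq \<and> (\<forall>x\<in>set (h @ [d]). x < n)"
    if "d \<in> avail n sq h i" for d i
    using Suc.prems that by (auto simp: avail_def)
  have bounded: "\<forall>d\<in>avail n sq h i. \<forall>x\<in>set (spe n p sq R k (h @ [d])). x < n" for i
  proof
    fix d assume "d \<in> avail n sq h i"
    from snoc[OF this] show "\<forall>x\<in>set (spe n p sq R k (h @ [d])). x < n" by (intro Suc.IH) auto
  qed
  obtain best where "best \<in> avail n sq h (snd (sq ! length h))"
    and "spe n p sq R (Suc k) h = spe n p sq R k (h @ [best])"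
    using spe_Suc_best[OF Suc.prems(1) bounded] by (elim bexE conjE) (rule that)
  then show ?case using bounded by simp
qed simp

lemma pending_other_agent:
  assumes "j < n" and "fst (sq ! length h) \<noteq> j"
  shows "pending sq p j (Suc (length h)) = pending sq p j (length h)"
proof -
  have other: "pos sq (j, i) \<noteq> length h" if "i < p" for i
    using nth_pos_sq[OF assms(1) that] assms(2) by force
  have "Suc (length h) \<le> pos sq (j, i) \<longleftrightarrow> length h \<le> pos sq (j, i)" if "i < p" for i
    using other[OF that] by auto
  then show ?thesis unfolding pending_def by blast
qed

lemma pending_own_turn:
  assumes "length h < length sq" and turn: "sq ! length h = (j, i)"
  shows "pending sq p j (length h) = insert i (pending sq p j (Suc (length h)))"
    and "i \<notin> pending sq p j (Suc (length h))"
proof -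
  have i: "i < p" and posi: "pos sq (j, i) = length h"
    using nth_sq_bounds[OF assms(1)] pos_nth[OF assms(1)] turn by auto
  have j: "j < n" using nth_sq_bounds[OF assms(1)] turn by simp
  have unique: "i' = i" if "i' < p" "pos sq (j, i') = length h" for i'
  proof -
    have "sq ! length h = (j, i')" using nth_pos_sq[OF j that(1)] that(2) by simp
    with turn show ?thesis by simp
  qed
  have "length h \<le> pos sq (j, i') \<longleftrightarrow> i' = i \<or> Suc (length h) \<le> pos sq (j, i')"
    if "i' < p" for i'
    using unique[OF that] posi by (cases "pos sq (j, i') = length h") auto
  then show "pending sq p j (length h) = insert i (pending sq p j (Suc (length h)))"
    using i unfolding pending_def by blast
  show "i \<notin> pending sq p j (Suc (length h))" using posi unfolding pending_def by simp
qed

lemma card_worse_bundles_spe: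
  assumes j: "j < n"
  shows "length h + k = length sq \<Longrightarrow> \<forall>x\<in>set h. x < n \<Longrightarrow>
    (\<Prod>i\<in>pending sq p j (length h). kval n sq j i)
      \<le> card (worse_bundles n p sq (R j) j h (bundle_of sq p (spe n p sq R k h) j))"
proof (induction k arbitrary: h)
  case 0
  have "pending sq p j (length h) = {}"
    using nth_pos_sq[OF j] 0 by (fastforce simp: pending_def)
  moreover have "bundle_of sq p h j \<in> worse_bundles n p sq (R j) j h (bundle_of sq p h j)"
    using bundle_of_mem_worse_bundles[OF j] 0 by simp
  ultimately show ?case
    using finite_worse_bundles by (auto simp: Suc_le_eq card_gt_0_iff)
next
  case (Suc k)
  define a i where "a = fst (sq ! length h)" and "i = snd (sq ! length h)"
  define A where "A = avail n sq h i"
  define W where "W h' = worse_bundles n p sq (R j) j h' (bundle_of sq p (spe n p sq R k h') j)" for h'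
  have lh: "length h < length sq" using Suc.prems(1) by simp
  have snoc: "length (h @ [d]) + k = length sq" "\<forall>x\<in>set (h @ [d]). x < n" if "d \<in> A" for d
    using Suc.prems that by (auto simp: A_def avail_def)
  have IH: "(\<Prod>i\<in>pending sq p j (Suc (length h)). kval n sq j i) \<le> card (W (h @ [d]))"
    if "d \<in> A" for d
    using Suc.IH[OF snoc[OF that]] unfolding W_def by simp
  have bounded: "\<forall>d\<in>A. \<forall>x\<in>set (spe n p sq R k (h @ [d])). x < n"
    using snoc spe_bounded by blast
  obtain best where best: "best \<in> A"
    and best_opt: "\<forall>d\<in>A. (bundle_of sq p (spe n p sq R k (h @ [best])) a,
                             bundle_of sq p (spe n p sq R k (h @ [d])) a) \<in> R a"
    and spe_Suc: "spe n p sq R (Suc k) h = spe n p sq R k (h @ [best])"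
    using spe_Suc_best[OF Suc.prems(1), folded i_def, folded A_def a_def, OF bounded]
    by (elim bexE conjE) (rule that)
  have goal: "?case \<longleftrightarrow>
      (\<Prod>i\<in>pending sq p j (length h). kval n sq j i)
        \<le> card (worse_bundles n p sq (R j) j h (bundle_of sq p (spe n p sq R k (h @ [best])) j))"
    unfolding spe_Suc ..
  show ?case
  proof (cases "a = j")
    case False
    then have "pending sq p j (Suc (length h)) = pending sq p j (length h)"
      using pending_other_agent[OF j, of h] unfolding a_def by blast
    then show ?thesis
      unfolding goal using IH[OF best] worse_bundles_snoc_subset
      by (metis W_def card_mono finite_worse_bundles le_trans)
  next
    case True
    let ?P = "\<Prod>i\<in>pending sq p j (Suc (length h)). kval n sq j i"
    have turn: "sq ! length h = (j, i)" using True unfolding a_def i_def by (metis prod.collapse)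
    have posi: "pos sq (j, i) = length h" using pos_nth[OF lh] turn by simp
    have i: "i < p" using nth_sq_bounds[OF lh] unfolding i_def by simp
    have "trans (R j)" using lin j linear_order_onD(2) by blast
    have "(\<Prod>i\<in>pending sq p j (length h). kval n sq j i) = kval n sq j i * ?P"
      using pending_own_turn[OF lh turn] by (simp add: finite_pending)
    also have "\<dots> \<le> card A * ?P"
      using card_avail_ge[of n h sq i] posi unfolding kval_def A_def by simp
    also have "\<dots> \<le> card (\<Union>d\<in>A. W (h @ [d]))"
      using IH worse_bundles_snoc_disjoint[OF i posi]
      by (intro card_le_card_UN_disjoint) (auto simp: A_def avail_def W_def finite_worse_bundles)
    also have "\<dots> \<le> card (worse_bundles n p sq (R j) j h (bundle_of sq p (spe n p sq R k (h @ [best])) j))"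
      using best_opt worse_bundles_antimono[OF \<open>trans (R j)\<close>] worse_bundles_snoc_subset True
      by (intro card_mono finite_worse_bundles) (fastforce simp: W_def)
    finally show ?thesis unfolding goal .
  qed
qed

end

theorem proposition6:
  fixes n p :: nat and sq :: "(nat \<times> nat) list" and R :: "nat \<Rightarrow> nat list rel" and j :: nat
  assumes "valid_order n p sq"
    and "\<forall>a<n. linear_order_on (bundles n p) (R a)"
    and "j < n"
  shows "rank n p R j (bundle_of sq p (spne_outcome n p sq R) j)
           \<le> n ^ p + 1 - (\<Prod>i<p. kval n sq j i)"
proof -
  define X where "X = worse_bundles n p sq (R j) j [] (bundle_of sq p (spne_outcome n p sq R) j)"
  have "pending sq p j 0 = {..<p}" by (auto simp: pending_def)
  then have "(\<Prod>i<p. kval n sq j i) \<le> card X"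
    using card_worse_bundles_spe[OF assms, of "[]" "length sq"]
    unfolding X_def spne_outcome_def by simp
  moreover have "antisym (R j)" using assms(2,3) linear_order_onD(3) by blast
  moreover have "X \<subseteq> bundles n p" "\<forall>b\<in>X. (bundle_of sq p (spne_outcome n p sq R) j, b) \<in> R j"
    unfolding X_def worse_bundles_def by auto
  ultimately show ?thesis
    using card_above_plus_card_below_le[of "R j" "bundles n p" X] finite_bundles
    unfolding rank_def card_bundles by fastforce
qed

end
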